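(* Fix an integer $k\ge 2$ and a prime $p$, and let $g_{pk}$ denote the common genus of all januarials constructed from the Hecke group $\Delta_k$ acting on $PL(F_p)$. Then for every such januarial: 1. if it is of simple type $(h,g_1,g_2)$, then $g_1+g_2+h=g_{pk}+1$; 2. if it is of general type $((h_1,g_1),(h_2,g_2))$, then $g_1+g_2+(h_1+h_2+\alpha)/2=g_{pk}+1$, where $\alpha=v-e$ with $v$ and $e$ the numbers of vertices and edges of its common graph $\Upsilon$.
   Context: Let $\Delta(2,k,\ell)=\langle x,y:x^2=y^k=(xy)^\ell=1\rangle$ and let $\Delta_k=\Delta(2,k,\infty)$. For an action on a finite set $S$, the coset graph has: - vertex set $S$; - an undirected $x$-edge for each pair of points transposed by $x$; - a directed $y$-edge $u\to uy$. It is $2$-cell embedded in a closed orientable surface via the rotation system (incoming $y$-edge, outgoing $y$-edge, $x$-edge) at each vertex. The faces are $y$-faces (boundary $y^n$) and $xy$-faces (boundary $(xy)^m$); this is the coset diagram. A januarial is a coset diagram in which $\langle xy\rangle$ has exactly two orbits, each of size $|S|/2$. Let $S_1,S_2$ be the closures of its two $xy$-faces. Collapsing each $y$-face to a point gives the companion diagram $J'$, with images $S_i'$ of $S_i$. Let $R_i$ be a small closed neighbourhood of $S_i'$ in $J'$, let $g_i$ be its genus and $h_i$ its number of boundary components. The common graph is $\Upsilon=S_1'\cap S_2'$. The januarial is of simple type $(h,g_1,g_2)$ if $\Upsilon$ is a union of $h$ disjoint simple circuits (then $h_1=h_2=h$). Otherwise it is of general type $((h_1,g_1),(h_2,g_2))$.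 A januarial constructed from $\Delta_k$ acting on $PL(F_p)$ is defined as follows. Let $\ell=(p+1)/2$. Let $x,y$ act on $PL(F_p)$ by $$X:z\mapsto \frac{az+cd}{cz-a},\qquad Y:z\mapsto \frac{ez+fd}{fz+b-e},$$ with integers $a,\dots,f$ satisfying - $\nabla=-(a^2+dc^2)\neq0$, - $1+df^2+e^2-eb=0$, - $\theta\nabla=r^2$, where $r=a(2e-b)+2dcf$. Here $\theta$ is a root of $f_\ell=\sum_{j\ge0}(-1)^j\binom{\ell-1-j}{j}\theta^{(\ell-1)/2-j}$ ($\ell$ odd), respectively $f_\ell=\sum_{j\ge0}(-1)^j\binom{\ell-1-j}{j}\theta^{\ell/2-1-2j}$ ($\ell$ even), that is not a root of $f_{\ell/s}$ for any divisor $s>1$ of $\ell$. These choices make $XY$ have exactly two orbits of size $\ell$. All januarials so constructed, for fixed $p$ and $k$, have the same genus $g_{pk}$. *)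

theory Defs
  imports "HOL-Number_Theory.Number_Theory"
begin

definition orb :: "('a \<Rightarrow> 'a) \<Rightarrow> 'a \<Rightarrow> 'a set" where
  "orb g u = {(g ^^ n) u | n. True}"

text \<open>The point u(xy) = (ux)y.\<close>
definition xyact :: "('a \<Rightarrow> 'a) \<Rightarrow> ('a \<Rightarrow> 'a) \<Rightarrow> 'a \<Rightarrow> 'a" where
  "xyact X Y u = Y (X u)"

definition y_orbits :: "'a set \<Rightarrow> ('a \<Rightarrow> 'a) \<Rightarrow> 'a set set" where
  "y_orbits S Y = orb Y ` S"

definition xy_orbits :: "'a set \<Rightarrow> ('a \<Rightarrow> 'a) \<Rightarrow> ('a \<Rightarrow> 'a) \<Rightarrow> 'a set set" where
  "xy_orbits S X Y = orb (xyact X Y) ` S"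

text \<open>A coset diagram is connected (it is 2-cell embedded in a closed, hence connected,
  surface): the action of x and y is transitive.\<close>
definition transitive_xy :: "'a set \<Rightarrow> ('a \<Rightarrow> 'a) \<Rightarrow> ('a \<Rightarrow> 'a) \<Rightarrow> bool" where
  "transitive_xy S X Y \<longleftrightarrow>
     (\<forall>u\<in>S. \<forall>v\<in>S. (u, v) \<in> ({(w, X w) | w. w \<in> S} \<union> {(w, Y w) | w. w \<in> S})\<^sup>*)"

definition januarial :: "'a set \<Rightarrow> ('a \<Rightarrow> 'a) \<Rightarrow> ('a \<Rightarrow> 'a) \<Rightarrow> bool" where
  "januarial S X Y \<longleftrightarrow>
     finite S \<and> bij_betw X S S \<and> bij_betw Y S S \<and> (\<forall>u\<in>S. X (X u) = u) \<and>
     transitive_xy S X Y \<and>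
     card (xy_orbits S X Y) = 2 \<and> (\<forall>F\<in>xy_orbits S X Y. 2 * card F = card S)"

text \<open>Genus of the coset diagram, via Euler's formula V - E + F = 2 - 2g:
  vertices = points of S, edges = one directed y-edge per point plus one x-edge per
  pair of points transposed by x, faces = y-faces (orbits of y) and xy-faces
  (orbits of xy).\<close>
definition x_edges :: "'a set \<Rightarrow> ('a \<Rightarrow> 'a) \<Rightarrow> 'a set set" where
  "x_edges S X = {{u, X u} | u. u \<in> S \<and> X u \<noteq> u}"

definition diagram_genus :: "'a set \<Rightarrow> ('a \<Rightarrow> 'a) \<Rightarrow> ('a \<Rightarrow> 'a) \<Rightarrow> real" where
  "diagram_genus S X Y =
     (2 - (real (card S) - (real (card S) + real (card (x_edges S X)))
           + (real (card (y_orbits S Y)) + real (card (xy_orbits S X Y))))) / 2"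

text \<open>In J' the vertices are the y-orbits (collapsed y-faces), the edges are the x-edges,
  the rotation at a collapsed vertex is given by y, and the faces are the two xy-faces.
  For an xy-face F, its closure S' consists of the face, the vertices (y-orbits) meeting F
  and the x-edges having F on at least one side (edge {u, ux} has face(u) on one side
  and face(ux) on the other).\<close>
definition cl_vertices :: "'a set \<Rightarrow> ('a \<Rightarrow> 'a) \<Rightarrow> 'a set \<Rightarrow> 'a set set" where
  "cl_vertices S Y F = {orb Y u | u. u \<in> S \<and> u \<in> F}"

definition cl_darts :: "'a set \<Rightarrow> ('a \<Rightarrow> 'a) \<Rightarrow> 'a set \<Rightarrow> 'a set" where
  "cl_darts S X F = {u \<in> S. X u \<noteq> u \<and> (u \<in> F \<or> X u \<in> F)}"

definition cl_edges :: "'a set \<Rightarrow> ('a \<Rightarrow> 'a) \<Rightarrow> 'a set \<Rightarrow> 'a set set" where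
  "cl_edges S X F = {{u, X u} | u. u \<in> cl_darts S X F}"

text \<open>Euler characteristic of R (which deformation retracts to S'):
  vertices - edges + 1 (the open disc of the face).\<close>
definition nbhd_euler :: "'a set \<Rightarrow> ('a \<Rightarrow> 'a) \<Rightarrow> ('a \<Rightarrow> 'a) \<Rightarrow> 'a set \<Rightarrow> int" where
  "nbhd_euler S X Y F =
     int (card (cl_vertices S Y F)) - int (card (cl_edges S X F)) + 1"

text \<open>Rotation of the ribbon subgraph (boundary graph of the face) induced by the rotation y:
  the next dart around the vertex that belongs to the subgraph.\<close>
definition restr_rot :: "('a \<Rightarrow> 'a) \<Rightarrow> 'a set \<Rightarrow> 'a \<Rightarrow> 'a" where
  "restr_rot Y D u = (Y ^^ (LEAST n. 0 < n \<and> (Y ^^ n) u \<in> D)) u"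

text \<open>The small closed neighbourhood R of S' is the thickening of the boundary graph of F
  (a ribbon graph) with the disc F glued onto the boundary curve tracing F.  Hence its
  boundary components are the faces of the ribbon subgraph other than F itself.\<close>
definition nbhd_boundary :: "'a set \<Rightarrow> ('a \<Rightarrow> 'a) \<Rightarrow> ('a \<Rightarrow> 'a) \<Rightarrow> 'a set \<Rightarrow> int" where
  "nbhd_boundary S X Y F =
     int (card (orb (\<lambda>u. restr_rot Y (cl_darts S X F) (X u)) ` cl_darts S X F)) - 1"

text \<open>Genus of R from \<open>\<chi>(R) = 2 - 2g - h\<close>.\<close>
definition nbhd_genus :: "'a set \<Rightarrow> ('a \<Rightarrow> 'a) \<Rightarrow> ('a \<Rightarrow> 'a) \<Rightarrow> 'a set \<Rightarrow> real" where
  "nbhd_genus S X Y F =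
     (2 - real_of_int (nbhd_boundary S X Y F) - real_of_int (nbhd_euler S X Y F)) / 2"

definition common_vertices :: "'a set \<Rightarrow> ('a \<Rightarrow> 'a) \<Rightarrow> 'a set \<Rightarrow> 'a set \<Rightarrow> 'a set set" where
  "common_vertices S Y O1 O2 = {C \<in> y_orbits S Y. C \<inter> O1 \<noteq> {} \<and> C \<inter> O2 \<noteq> {}}"

text \<open>Edges with O1 on one side and O2 on the other (represented by their end in O1).\<close>
definition common_darts :: "'a set \<Rightarrow> ('a \<Rightarrow> 'a) \<Rightarrow> 'a set \<Rightarrow> 'a set \<Rightarrow> 'a set" where
  "common_darts S X O1 O2 = {u \<in> S. X u \<noteq> u \<and> u \<in> O1 \<and> X u \<in> O2}"

definition common_edges :: "'a set \<Rightarrow> ('a \<Rightarrow> 'a) \<Rightarrow> 'a set \<Rightarrow> 'a set \<Rightarrow> 'a set set" where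
  "common_edges S X O1 O2 = {{u, X u} | u. u \<in> common_darts S X O1 O2}"

definition common_alpha :: "'a set \<Rightarrow> ('a \<Rightarrow> 'a) \<Rightarrow> ('a \<Rightarrow> 'a) \<Rightarrow> 'a set \<Rightarrow> 'a set \<Rightarrow> int" where
  "common_alpha S X Y O1 O2 =
     int (card (common_vertices S Y O1 O2)) - int (card (common_edges S X O1 O2))"

text \<open>Degree of a vertex (y-orbit) in \<open>\<Upsilon>\<close>: number of edge-ends of common edges at it
  (a loop contributes 2).\<close>
definition common_degree :: "'a set \<Rightarrow> ('a \<Rightarrow> 'a) \<Rightarrow> 'a set \<Rightarrow> 'a set \<Rightarrow> 'a set \<Rightarrow> nat" where
  "common_degree S X O1 O2 C =
     card {u \<in> C. u \<in> common_darts S X O1 O2 \<or> u \<in> common_darts S X O2 O1}"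

definition common_adj :: "'a set \<Rightarrow> ('a \<Rightarrow> 'a) \<Rightarrow> ('a \<Rightarrow> 'a) \<Rightarrow> 'a set \<Rightarrow> 'a set \<Rightarrow> ('a set \<times> 'a set) set" where
  "common_adj S X Y O1 O2 = {(orb Y u, orb Y (X u)) | u. u \<in> common_darts S X O1 O2}"

definition common_components :: "'a set \<Rightarrow> ('a \<Rightarrow> 'a) \<Rightarrow> ('a \<Rightarrow> 'a) \<Rightarrow> 'a set \<Rightarrow> 'a set \<Rightarrow> nat" where
  "common_components S X Y O1 O2 =
     card ((\<lambda>C. {C' \<in> common_vertices S Y O1 O2.
                  (C, C') \<in> (common_adj S X Y O1 O2 \<union> (common_adj S X Y O1 O2)\<inverse>)\<^sup>*})
           ` common_vertices S Y O1 O2)"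

text \<open>Simple type: \<open>\<Upsilon>\<close> is a disjoint union of simple circuits, i.e. every vertex of \<open>\<Upsilon>\<close>
  has degree exactly 2 in \<open>\<Upsilon>\<close>; the number h of circuits is then the number of components.\<close>
definition simple_type :: "'a set \<Rightarrow> ('a \<Rightarrow> 'a) \<Rightarrow> ('a \<Rightarrow> 'a) \<Rightarrow> 'a set \<Rightarrow> 'a set \<Rightarrow> bool" where
  "simple_type S X Y O1 O2 \<longleftrightarrow>
     (\<forall>C \<in> common_vertices S Y O1 O2. common_degree S X O1 O2 C = 2)"

text \<open>PL(F_p) = F_p \<union> {\<infinity>}, represented as {0..p} with p standing for \<infinity>.\<close>
definition PL :: "nat \<Rightarrow> nat set" where
  "PL p = {0..p}"

definition inv_modp :: "nat \<Rightarrow> int \<Rightarrow> int" where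
  "inv_modp p x = (x ^ (p - 2)) mod int p"

definition mobius :: "nat \<Rightarrow> int \<Rightarrow> int \<Rightarrow> int \<Rightarrow> int \<Rightarrow> nat \<Rightarrow> nat" where
  "mobius p \<alpha> \<beta> \<gamma> \<delta> z =
     (if z = p then
        (if \<gamma> mod int p = 0 then p else nat ((\<alpha> * inv_modp p \<gamma>) mod int p))
      else
        (let den = (\<gamma> * int z + \<delta>) mod int p in
         if den = 0 then p else nat (((\<alpha> * int z + \<beta>) * inv_modp p den) mod int p)))"

definition Xmap :: "nat \<Rightarrow> int \<Rightarrow> int \<Rightarrow> int \<Rightarrow> nat \<Rightarrow> nat" where
  "Xmap p a c d = mobius p a (c * d) c (- a)"

definition Ymap :: "nat \<Rightarrow> int \<Rightarrow> int \<Rightarrow> int \<Rightarrow> int \<Rightarrow> nat \<Rightarrow> nat" where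
  "Ymap p b d e f = mobius p e (f * d) f (b - e)"

definition fpoly :: "nat \<Rightarrow> int \<Rightarrow> int" where
  "fpoly l \<theta> =
     (if odd l then (\<Sum>j = 0..(l - 1) div 2. (-1) ^ j * int ((l - 1 - j) choose j) * \<theta> ^ ((l - 1) div 2 - j))
      else (\<Sum>j = 0..l div 2 - 1. (-1) ^ j * int ((l - 1 - j) choose j) * \<theta> ^ (l div 2 - 1 - j)))"

end

theory Submission
  imports Defs
begin

text \<open>The closures S1' and S2' of the two faces cover the companion diagram J' and
  intersect in the common graph, so inclusion-exclusion on vertices and edges, together with
  Euler's formula for J' and for the neighbourhoods R1, R2, yields the general identity for
  every januarial.  In the simple case the common graph is a union of circuits, hence
  alpha = 0; and each boundary component of R_i runs once along one circuit of the common
  graph, so h_1 = h_2 = h.\<close>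

section \<open>Orbits and first-return maps\<close>

lemma funpow_in_orb: "(f ^^ n) u \<in> orb f u"
  unfolding orb_def by blast

lemma self_in_orb: "u \<in> orb f u"
  using funpow_in_orb[of 0] by simp

lemma orb_closed: "v \<in> orb f u \<Longrightarrow> f v \<in> orb f u"
  unfolding orb_def by (auto intro: exI[of _ "Suc _"])

lemma orb_induct [consumes 1, case_names base step]:
  assumes "v \<in> orb f u" and "P u" and "\<And>w. P w \<Longrightarrow> P (f w)"
  shows "P v"
proof -
  obtain n where "v = (f ^^ n) u"
    using assms(1) unfolding orb_def by blast
  moreover have "P ((f ^^ n) u)"
    by (induction n) (use assms in auto)
  ultimately show ?thesis by simp
qed

lemma orb_subset: "u \<in> A \<Longrightarrow> (\<And>x. x \<in> A \<Longrightarrow> f x \<in> A) \<Longrightarrow> orb f u \<subseteq> A"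
  by (auto elim: orb_induct)

lemma orb_subset_orb: "v \<in> orb f u \<Longrightarrow> orb f v \<subseteq> orb f u"
  by (auto elim: orb_induct intro: orb_closed)

lemma funpow_add_apply: "(f ^^ m) ((f ^^ n) x) = (f ^^ (m + n)) x"
  by (simp add: funpow_add)

lemma orb_eq_if_periodic:
  assumes "0 < n" and "(f ^^ n) u = u" and "v \<in> orb f u"
  shows "orb f v = orb f u"
proof
  show "orb f v \<subseteq> orb f u"
    using assms(3) by (rule orb_subset_orb)
  obtain i where i: "v = (f ^^ i) u"
    using assms(3) unfolding orb_def by blast
  have "((f ^^ n) ^^ i) u = u"
    by (induction i) (simp_all add: assms(2))
  then have "(f ^^ (n * i - i + i)) u = u"
    using assms(1) by (simp add: funpow_mult mult.commute)
  then have "(f ^^ (n * i - i)) v = u"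
    by (simp add: i funpow_add_apply)
  then show "orb f u \<subseteq> orb f v"
    by (metis funpow_in_orb orb_subset_orb)
qed

lemma self_in_orb_apply:
  assumes "0 < n" and "(f ^^ n) z = z"
  shows "z \<in> orb f (f z)"
proof -
  have "orb f (f z) = orb f z"
    using assms orb_closed[OF self_in_orb] by (rule orb_eq_if_periodic)
  then show ?thesis
    using self_in_orb[of z f] by simp
qed

lemma periodic_if_inj_on:
  assumes "finite A" and "\<And>x. x \<in> A \<Longrightarrow> f x \<in> A" and "inj_on f A" and "u \<in> A"
  shows "\<exists>n>0. (f ^^ n) u = u"
proof -
  have in_A: "(f ^^ n) u \<in> A" for n
    by (induction n) (use assms(2,4) in auto)
  then have "range (\<lambda>n. (f ^^ n) u) \<subseteq> A"
    by blast
  then have "finite (range (\<lambda>n. (f ^^ n) u))"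
    using assms(1) by (rule finite_subset)
  then have "\<not> inj (\<lambda>n. (f ^^ n) u)"
    using finite_imageD infinite_UNIV_nat by blast
  then obtain i j where ij: "i \<noteq> j" "(f ^^ i) u = (f ^^ j) u"
    unfolding inj_def by blast
  obtain i d where "0 < d" and "(f ^^ (i + d)) u = (f ^^ i) u"
  proof (cases "i < j")
    case True
    then show thesis
      using that[of "j - i" i] ij by simp
  next
    case False
    then show thesis
      using that[of "i - j" j] ij by simp
  qed
  moreover have "(f ^^ (i + d)) u = (f ^^ i) u \<Longrightarrow> (f ^^ d) u = u" for i
  proof (induction i)
    case (Suc i)
    then have "f ((f ^^ (i + d)) u) = f ((f ^^ i) u)"
      by simp
    then have "(f ^^ (i + d)) u = (f ^^ i) u"
      using inj_onD[OF assms(3)] in_A by blast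
    then show ?case
      by (rule Suc.IH)
  qed simp
  ultimately show ?thesis
    by blast
qed

lemma orb_cong: "(\<And>v. v \<in> orb f u \<Longrightarrow> f v = f' v) \<Longrightarrow> orb f u = orb f' u"
proof -
  assume eq: "\<And>v. v \<in> orb f u \<Longrightarrow> f v = f' v"
  have "(f ^^ n) u = (f' ^^ n) u" for n
  proof (induction n)
    case (Suc n)
    then show ?case
      using eq[OF funpow_in_orb[of n f u]] by simp
  qed simp
  then show ?thesis
    unfolding orb_def by simp
qed

lemma restr_rot_eq:
  assumes "0 < m" and "(f ^^ m) w \<in> D" and "\<And>j. 0 < j \<Longrightarrow> j < m \<Longrightarrow> (f ^^ j) w \<notin> D"
  shows "restr_rot f D w = (f ^^ m) w"
proof -
  have "(LEAST n. 0 < n \<and> (f ^^ n) w \<in> D) = m"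
    by (rule Least_equality) (use assms not_less in blast)+
  then show ?thesis
    unfolding restr_rot_def by simp
qed

lemma restr_rot_first_return:
  assumes "0 < n" and "(f ^^ n) w \<in> D"
  shows "\<exists>m>0. (f ^^ m) w \<in> D \<and> (\<forall>j. 0 < j \<longrightarrow> j < m \<longrightarrow> (f ^^ j) w \<notin> D)
    \<and> restr_rot f D w = (f ^^ m) w"
proof -
  let ?m = "LEAST m. 0 < m \<and> (f ^^ m) w \<in> D"
  have "0 < ?m \<and> (f ^^ ?m) w \<in> D"
    by (rule LeastI[of _ n]) (use assms in simp)
  moreover have "\<forall>j. 0 < j \<longrightarrow> j < ?m \<longrightarrow> (f ^^ j) w \<notin> D"
    using not_less_Least by blast
  ultimately show ?thesis
    unfolding restr_rot_def by blast
qed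

lemma restr_rot_in_orb:
  assumes "0 < n" and "(f ^^ n) u = u" and "u \<in> D" and v: "v \<in> D \<inter> orb f u"
  shows "restr_rot f D v \<in> D \<inter> orb f u"
proof -
  have "orb f v = orb f u"
    using v by (intro orb_eq_if_periodic[OF assms(1,2)]) blast
  then have "u \<in> orb f v"
    using self_in_orb[of u f] by simp
  then obtain i where i: "(f ^^ i) v = u"
    unfolding orb_def by blast
  have "(f ^^ (n + i)) v = (f ^^ n) ((f ^^ i) v)"
    by (rule funpow_add_apply[symmetric])
  also have "\<dots> = u"
    using assms(2) i by simp
  finally have "(f ^^ (n + i)) v \<in> D"
    using assms(3) by simp
  moreover have "0 < n + i"
    using assms(1) by simp
  ultimately obtain m where "(f ^^ m) v \<in> D" and r: "restr_rot f D v = (f ^^ m) v"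
    by (meson restr_rot_first_return)
  moreover have "(f ^^ m) v \<in> orb f u"
    using orb_subset_orb[of v f u] funpow_in_orb[of m f v] v by blast
  ultimately show ?thesis
    unfolding r by blast
qed

lemma orb_restr_rot_last_visit:
  "\<exists>i\<le>n. (f ^^ i) u \<in> orb (restr_rot f D) u \<and> (\<forall>j. i < j \<longrightarrow> j \<le> n \<longrightarrow> (f ^^ j) u \<notin> D)"
proof (induction n)
  case 0
  show ?case
    using self_in_orb[of u "restr_rot f D"] by auto
next
  case (Suc n)
  then obtain i where i: "i \<le> n" "(f ^^ i) u \<in> orb (restr_rot f D) u"
    "\<And>j. i < j \<Longrightarrow> j \<le> n \<Longrightarrow> (f ^^ j) u \<notin> D"
    by blast
  show ?case
  proof (cases "(f ^^ Suc n) u \<in> D")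
    case True
    have "restr_rot f D ((f ^^ i) u) = (f ^^ (Suc n - i)) ((f ^^ i) u)"
    proof (rule restr_rot_eq)
      show "0 < Suc n - i"
        using i(1) by simp
      show "(f ^^ (Suc n - i)) ((f ^^ i) u) \<in> D"
        using True i(1) by (simp add: funpow_add_apply)
      show "(f ^^ j) ((f ^^ i) u) \<notin> D" if "0 < j" and "j < Suc n - i" for j
        using i(3)[of "j + i"] that by (simp add: funpow_add_apply)
    qed
    also have "\<dots> = (f ^^ Suc n) u"
      using i(1) by (simp add: funpow_add_apply)
    finally have "(f ^^ Suc n) u \<in> orb (restr_rot f D) u"
      using orb_closed[OF i(2)] by metis
    then show ?thesis
      by (intro exI[of _ "Suc n"]) simp
  next
    case False
    then show ?thesis
      using i le_Suc_eq by (intro exI[of _ i]) auto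
  qed
qed

lemma orb_restr_rot:
  assumes "0 < n" and "(f ^^ n) u = u" and "u \<in> D"
  shows "orb (restr_rot f D) u = D \<inter> orb f u"
proof
  show "orb (restr_rot f D) u \<subseteq> D \<inter> orb f u"
    using orb_subset[of u "D \<inter> orb f u"] restr_rot_in_orb[OF assms] assms(3) self_in_orb[of u f]
    by blast
  show "D \<inter> orb f u \<subseteq> orb (restr_rot f D) u"
  proof
    fix v
    assume "v \<in> D \<inter> orb f u"
    then obtain k where "v = (f ^^ k) u" and "(f ^^ k) u \<in> D"
      unfolding orb_def by blast
    moreover obtain i where "i \<le> k" and "(f ^^ i) u \<in> orb (restr_rot f D) u"
      and "\<And>j. i < j \<Longrightarrow> j \<le> k \<Longrightarrow> (f ^^ j) u \<notin> D"
      using orb_restr_rot_last_visit[of k f u D] by blast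
    ultimately show "v \<in> orb (restr_rot f D) u"
      using le_neq_implies_less by blast
  qed
qed

lemma rtrancl_graph_iff_orb:
  assumes closed: "\<And>x. x \<in> A \<Longrightarrow> f x \<in> A"
    and periodic: "\<And>x. x \<in> A \<Longrightarrow> \<exists>n>0. (f ^^ n) x = x"
    and x: "x \<in> A"
  shows "(x, y) \<in> ({(v, f v) | v. v \<in> A} \<union> {(v, f v) | v. v \<in> A}\<inverse>)\<^sup>* \<longleftrightarrow> y \<in> orb f x"
    (is "_ \<in> (?G \<union> ?G\<inverse>)\<^sup>* \<longleftrightarrow> _")
proof
  assume "(x, y) \<in> (?G \<union> ?G\<inverse>)\<^sup>*"
  then show "y \<in> orb f x"
  proof (induction rule: rtrancl_induct)
    case base
    show ?case
      by (rule self_in_orb)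
  next
    case (step y z)
    from step.hyps(2) consider "z = f y" | "y = f z" and "z \<in> A"
      by blast
    then show ?case
    proof cases
      case 1
      then show ?thesis
        using orb_closed[OF step.IH] by simp
    next
      case 2
      obtain n where "0 < n" and "(f ^^ n) z = z"
        using periodic[OF \<open>z \<in> A\<close>] by blast
      then have "z \<in> orb f y"
        unfolding \<open>y = f z\<close> by (rule self_in_orb_apply)
      then show ?thesis
        using orb_subset_orb[OF step.IH] by blast
    qed
  qed
next
  assume "y \<in> orb f x"
  then have "y \<in> A \<and> (x, y) \<in> (?G \<union> ?G\<inverse>)\<^sup>*"
  proof (induction rule: orb_induct)
    case base
    show ?case
      using x by simp
  next
    case (step w)
    then have "(w, f w) \<in> ?G \<union> ?G\<inverse>"
      by blast
    with step closed show ?case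
      by (blast intro: rtrancl_into_rtrancl)
  qed
  then show "(x, y) \<in> (?G \<union> ?G\<inverse>)\<^sup>*" ..
qed

lemma rtrancl_map_prod_Image:
  assumes "inj_on \<phi> A" and "R \<subseteq> A \<times> A" and "a \<in> A"
  shows "(map_prod \<phi> \<phi> ` R)\<^sup>* `` {\<phi> a} = \<phi> ` (R\<^sup>* `` {a})"
proof
  have "(\<phi> a, \<phi> b) \<in> (map_prod \<phi> \<phi> ` R)\<^sup>*" if "(a, b) \<in> R\<^sup>*" for b
    using that
  proof (induction rule: rtrancl_induct)
    case (step b c)
    have "(\<phi> b, \<phi> c) \<in> map_prod \<phi> \<phi> ` R"
      using step.hyps(2) by force
    with step.IH show ?case
      by (rule rtrancl_into_rtrancl)
  qed simp
  then show "\<phi> ` (R\<^sup>* `` {a}) \<subseteq> (map_prod \<phi> \<phi> ` R)\<^sup>* `` {\<phi> a}"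
    by blast
  have "\<exists>b\<in>A. (a, b) \<in> R\<^sup>* \<and> c = \<phi> b" if "(\<phi> a, c) \<in> (map_prod \<phi> \<phi> ` R)\<^sup>*" for c
    using that
  proof (induction rule: rtrancl_induct)
    case base
    show ?case
      using assms(3) by blast
  next
    case (step c c')
    obtain b where b: "b \<in> A" "(a, b) \<in> R\<^sup>*" "c = \<phi> b"
      using step.IH by blast
    obtain x y where xy: "(x, y) \<in> R" "c = \<phi> x" "c' = \<phi> y"
      using step.hyps(2) by auto
    have "x \<in> A" and "y \<in> A"
      using xy(1) assms(2) by auto
    then have "x = b"
      using inj_onD[OF assms(1)] b xy by metis
    then show ?case
      using b xy \<open>y \<in> A\<close> by (blast intro: rtrancl_into_rtrancl)
  qed
  then show "(map_prod \<phi> \<phi> ` R)\<^sup>* `` {\<phi> a} \<subseteq> \<phi> ` (R\<^sup>* `` {a})"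
    by blast
qed

section \<open>The two faces of a januarial\<close>

locale januarial_faces =
  fixes S :: "'a set" and X Y :: "'a \<Rightarrow> 'a" and O1 O2 :: "'a set"
  assumes januarial: "januarial S X Y"
    and O1_xy_orbit: "O1 \<in> xy_orbits S X Y"
    and O2_xy_orbit: "O2 \<in> xy_orbits S X Y"
    and O1_neq_O2: "O1 \<noteq> O2"
begin

lemma swap_faces: "januarial_faces S X Y O2 O1"
  using januarial_faces_axioms unfolding januarial_faces_def by blast

lemma finite_S: "finite S"
  using januarial unfolding januarial_def by blast

lemma X_in_S: "u \<in> S \<Longrightarrow> X u \<in> S"
  using januarial bij_betwE unfolding januarial_def by blast

lemma X_X: "u \<in> S \<Longrightarrow> X (X u) = u"
  using januarial unfolding januarial_def by blast

lemma Y_in_S: "u \<in> S \<Longrightarrow> Y u \<in> S"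
  using januarial bij_betwE unfolding januarial_def by blast

lemma inj_on_Y: "inj_on Y S"
  using januarial bij_betw_imp_inj_on unfolding januarial_def by blast

abbreviation xy :: "'a \<Rightarrow> 'a" where
  "xy \<equiv> xyact X Y"

lemma xy_in_S: "u \<in> S \<Longrightarrow> xy u \<in> S"
  unfolding xyact_def by (simp add: X_in_S Y_in_S)

lemma inj_on_xy: "inj_on xy S"
proof (rule inj_onI)
  fix u v
  assume "u \<in> S" and "v \<in> S" and "xy u = xy v"
  then have "X u = X v"
    using inj_onD[OF inj_on_Y] X_in_S unfolding xyact_def by blast
  then show "u = v"
    using X_X \<open>u \<in> S\<close> \<open>v \<in> S\<close> by metis
qed

lemma xy_periodic: "u \<in> S \<Longrightarrow> \<exists>n>0. (xy ^^ n) u = u"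
  using periodic_if_inj_on[OF finite_S xy_in_S inj_on_xy] .

lemma Y_periodic: "u \<in> S \<Longrightarrow> \<exists>n>0. (Y ^^ n) u = u"
  using periodic_if_inj_on[OF finite_S Y_in_S inj_on_Y] .

lemma orb_Y_eq: "u \<in> S \<Longrightarrow> v \<in> orb Y u \<Longrightarrow> orb Y v = orb Y u"
  using Y_periodic orb_eq_if_periodic by metis

lemma O1_eq_orb_xy: obtains u where "u \<in> S" and "O1 = orb xy u"
  using O1_xy_orbit unfolding xy_orbits_def by blast

lemma orb_xy_O1: "v \<in> O1 \<Longrightarrow> orb xy v = O1"
proof -
  assume v: "v \<in> O1"
  obtain u where u: "u \<in> S" "O1 = orb xy u"
    by (rule O1_eq_orb_xy)
  obtain n where "0 < n" and "(xy ^^ n) u = u"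
    using xy_periodic[OF u(1)] by blast
  then show ?thesis
    using orb_eq_if_periodic v u(2) by metis
qed

lemma O1_subset_S: "O1 \<subseteq> S"
proof -
  obtain u where u: "u \<in> S" "O1 = orb xy u"
    by (rule O1_eq_orb_xy)
  show ?thesis
    unfolding u(2) using u(1) xy_in_S by (rule orb_subset)
qed

lemma O1_nonempty: "O1 \<noteq> {}"
  using self_in_orb O1_eq_orb_xy by (metis empty_iff)

lemma xy_in_O1: "v \<in> O1 \<Longrightarrow> xy v \<in> O1"
  using orb_closed self_in_orb orb_xy_O1 by metis

lemma O1_O2_disjoint: "O1 \<inter> O2 = {}"
proof (rule ccontr)
  assume "O1 \<inter> O2 \<noteq> {}"
  then obtain v where "v \<in> O1" and "v \<in> O2"
    by blast
  then have "O1 = O2"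
    using orb_xy_O1 januarial_faces.orb_xy_O1[OF swap_faces] by metis
  with O1_neq_O2 show False ..
qed

lemma xy_orbits_eq: "xy_orbits S X Y = {O1, O2}"
proof -
  have "card (xy_orbits S X Y) = 2"
    using januarial unfolding januarial_def by blast
  then obtain A B where AB: "xy_orbits S X Y = {A, B}"
    unfolding card_2_iff by blast
  then have "O1 \<in> {A, B}" and "O2 \<in> {A, B}"
    using O1_xy_orbit O2_xy_orbit by simp_all
  then have "{A, B} = {O1, O2}"
    using O1_neq_O2 by fast
  then show ?thesis
    using AB by simp
qed

lemma S_eq_O1_Un_O2: "S = O1 \<union> O2"
proof
  show "S \<subseteq> O1 \<union> O2"
  proof
    fix u
    assume "u \<in> S"
    then have "orb xy u \<in> {O1, O2}"
      using xy_orbits_eq unfolding xy_orbits_def by blast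
    then show "u \<in> O1 \<union> O2"
      using self_in_orb[of u xy] by blast
  qed
  show "O1 \<union> O2 \<subseteq> S"
    using O1_subset_S januarial_faces.O1_subset_S[OF swap_faces] by (rule Un_least)
qed

lemma in_O2_iff: "u \<in> S \<Longrightarrow> u \<in> O2 \<longleftrightarrow> u \<notin> O1"
  using S_eq_O1_Un_O2 O1_O2_disjoint by blast

lemma xy_in_O1_iff: "u \<in> S \<Longrightarrow> xy u \<in> O1 \<longleftrightarrow> u \<in> O1"
  using xy_in_O1 januarial_faces.xy_in_O1[OF swap_faces] in_O2_iff xy_in_S by metis

lemma Y_in_O1_iff: "u \<in> S \<Longrightarrow> Y u \<in> O1 \<longleftrightarrow> X u \<in> O1"
  using xy_in_O1_iff[of "X u"] X_in_S X_X unfolding xyact_def by simp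

subsection \<open>Inclusion-exclusion for the closures of the faces\<close>

lemma cl_vertices_eq_image: "cl_vertices S Y F = orb Y ` (S \<inter> F)"
  unfolding cl_vertices_def by blast

lemma cl_edges_eq_image: "cl_edges S X F = (\<lambda>u. {u, X u}) ` cl_darts S X F"
  unfolding cl_edges_def by blast

lemma cl_vertices_Un: "cl_vertices S Y O1 \<union> cl_vertices S Y O2 = y_orbits S Y"
proof -
  have "S \<inter> O1 \<union> S \<inter> O2 = S"
    using S_eq_O1_Un_O2 by blast
  then show ?thesis
    unfolding cl_vertices_eq_image y_orbits_def image_Un[symmetric] by simp
qed

lemma cl_vertices_Int: "cl_vertices S Y O1 \<inter> cl_vertices S Y O2 = common_vertices S Y O1 O2"
proof
  show "cl_vertices S Y O1 \<inter> cl_vertices S Y O2 \<subseteq> common_vertices S Y O1 O2"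
  proof
    fix C
    assume "C \<in> cl_vertices S Y O1 \<inter> cl_vertices S Y O2"
    then obtain a b where "a \<in> S" "a \<in> O1" "C = orb Y a" "b \<in> O2" "C = orb Y b"
      unfolding cl_vertices_eq_image by blast
    then show "C \<in> common_vertices S Y O1 O2"
      unfolding common_vertices_def y_orbits_def using self_in_orb by fast
  qed
  show "common_vertices S Y O1 O2 \<subseteq> cl_vertices S Y O1 \<inter> cl_vertices S Y O2"
  proof
    fix C
    assume "C \<in> common_vertices S Y O1 O2"
    then obtain w a b where w: "w \<in> S" "C = orb Y w" and "a \<in> C" "a \<in> O1" "b \<in> C" "b \<in> O2"
      unfolding common_vertices_def y_orbits_def by blast
    moreover from this have "orb Y a = C" and "orb Y b = C"
      using orb_Y_eq by simp_all
    moreover have "a \<in> S" and "b \<in> S"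
      using \<open>a \<in> O1\<close> \<open>b \<in> O2\<close> S_eq_O1_Un_O2 by simp_all
    ultimately show "C \<in> cl_vertices S Y O1 \<inter> cl_vertices S Y O2"
      unfolding cl_vertices_eq_image by blast
  qed
qed

lemma cl_edges_Un: "cl_edges S X O1 \<union> cl_edges S X O2 = x_edges S X"
  unfolding cl_edges_def x_edges_def cl_darts_def using S_eq_O1_Un_O2 by blast

lemma cl_edges_Int: "cl_edges S X O1 \<inter> cl_edges S X O2 = common_edges S X O1 O2"
proof
  show "cl_edges S X O1 \<inter> cl_edges S X O2 \<subseteq> common_edges S X O1 O2"
  proof
    fix e
    assume e: "e \<in> cl_edges S X O1 \<inter> cl_edges S X O2"
    then obtain u where u: "u \<in> cl_darts S X O1" "e = {u, X u}"
      unfolding cl_edges_eq_image by blast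
    have "u \<in> S" and "X u \<in> S" and "X u \<noteq> u" and "X (X u) = u"
      using u(1) X_in_S X_X unfolding cl_darts_def by auto
    moreover have "e \<inter> O2 \<noteq> {}"
      using e unfolding cl_edges_def cl_darts_def by blast
    ultimately have "u \<in> common_darts S X O1 O2 \<or> X u \<in> common_darts S X O1 O2"
      using u in_O2_iff unfolding common_darts_def cl_darts_def by auto
    moreover have "{X u, X (X u)} = e"
      using u(2) \<open>X (X u) = u\<close> by auto
    ultimately show "e \<in> common_edges S X O1 O2"
      unfolding common_edges_def using u(2) by blast
  qed
  show "common_edges S X O1 O2 \<subseteq> cl_edges S X O1 \<inter> cl_edges S X O2"
    unfolding common_edges_def cl_edges_def common_darts_def cl_darts_def by blast
qed

lemma finite_cl_darts: "finite (cl_darts S X F)"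
  using finite_S unfolding cl_darts_def by simp

theorem nbhd_genus_sum:
  "nbhd_genus S X Y O1 + nbhd_genus S X Y O2
     + (real_of_int (nbhd_boundary S X Y O1) + real_of_int (nbhd_boundary S X Y O2)
        + real_of_int (common_alpha S X Y O1 O2)) / 2
   = diagram_genus S X Y + 1"
proof -
  have fin_vertices: "finite (cl_vertices S Y F)" for F
    using finite_S unfolding cl_vertices_eq_image by simp
  have "card (cl_vertices S Y O1) + card (cl_vertices S Y O2)
      = card (y_orbits S Y) + card (common_vertices S Y O1 O2)"
    using card_Un_Int[OF fin_vertices[of O1] fin_vertices[of O2]] unfolding cl_vertices_Un cl_vertices_Int .
  then have vertices: "real (card (cl_vertices S Y O1)) + real (card (cl_vertices S Y O2))
      = real (card (y_orbits S Y)) + real (card (common_vertices S Y O1 O2))"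
    by (metis of_nat_add)
  have fin_edges: "finite (cl_edges S X F)" for F
    using finite_cl_darts unfolding cl_edges_eq_image by simp
  have "card (cl_edges S X O1) + card (cl_edges S X O2)
      = card (x_edges S X) + card (common_edges S X O1 O2)"
    using card_Un_Int[OF fin_edges[of O1] fin_edges[of O2]] unfolding cl_edges_Un cl_edges_Int .
  then have edges: "real (card (cl_edges S X O1)) + real (card (cl_edges S X O2))
      = real (card (x_edges S X)) + real (card (common_edges S X O1 O2))"
    by (metis of_nat_add)
  show ?thesis
    unfolding nbhd_genus_def nbhd_euler_def common_alpha_def diagram_genus_def xy_orbits_eq
    using vertices edges O1_neq_O2 by (simp add: field_simps)
qed

lemma common_darts_subset_S: "common_darts S X O1 O2 \<subseteq> S"
  unfolding common_darts_def by blast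

lemma X_common_darts: "z \<in> common_darts S X O1 O2 \<Longrightarrow> X z \<in> common_darts S X O2 O1"
  unfolding common_darts_def using X_in_S X_X by auto

lemma common_vertices_commute: "common_vertices S Y O2 O1 = common_vertices S Y O1 O2"
  unfolding common_vertices_def by blast

lemma simple_type_commute: "simple_type S X Y O2 O1 \<longleftrightarrow> simple_type S X Y O1 O2"
  unfolding simple_type_def common_degree_def common_vertices_commute by (simp add: disj_commute)

lemma orb_Y_common_dart:
  assumes "z \<in> common_darts S X O1 O2"
  shows "orb Y z \<in> common_vertices S Y O1 O2"
proof -
  have z: "z \<in> S" "z \<in> O1" "X z \<in> O2"
    using assms unfolding common_darts_def by auto
  then have "Y z \<in> O2"
    using Y_in_O1_iff in_O2_iff X_in_S Y_in_S by metis
  then show ?thesis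
    unfolding common_vertices_def y_orbits_def
    using z self_in_orb[of z Y] orb_closed[OF self_in_orb, of Y z] by blast
qed

lemma common_vertex_has_common_dart:
  assumes "C \<in> common_vertices S Y O1 O2"
  shows "\<exists>z\<in>C. z \<in> common_darts S X O1 O2"
proof -
  obtain w a b where w: "w \<in> S" "C = orb Y w" and a: "a \<in> C" "a \<in> O1" and b: "b \<in> C" "b \<in> O2"
    using assms unfolding common_vertices_def y_orbits_def by blast
  have "a \<in> S"
    using a(2) O1_subset_S by blast
  have "C = orb Y a"
    using orb_Y_eq w a(1) by simp
  then obtain n where "b = (Y ^^ n) a"
    using b(1) unfolding orb_def by blast
  then have "(Y ^^ n) a \<notin> O1"
    using b(2) O1_O2_disjoint by blast
  then obtain i where "(Y ^^ i) a \<in> O1" and "(Y ^^ Suc i) a \<notin> O1"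
    using ex_least_nat_less[of "\<lambda>i. (Y ^^ i) a \<notin> O1" n] a(2) by auto
  moreover define z where "z = (Y ^^ i) a"
  ultimately have "z \<in> O1" and "z \<in> S" and "Y z \<notin> O1"
    using O1_subset_S by auto
  then have "X z \<in> O2" and "X z \<noteq> z"
    using Y_in_O1_iff in_O2_iff X_in_S by metis+
  then have "z \<in> common_darts S X O1 O2"
    unfolding common_darts_def using \<open>z \<in> O1\<close> \<open>z \<in> S\<close> by blast
  moreover have "z \<in> C"
    unfolding z_def \<open>C = orb Y a\<close> by (rule funpow_in_orb)
  ultimately show ?thesis
    by blast
qed

text \<open>Here the connectedness of the coset diagram enters: if no edge separated the two
  faces, both x and y would preserve O1.\<close>
lemma common_darts_nonempty: "common_darts S X O1 O2 \<noteq> {}"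
proof
  assume none: "common_darts S X O1 O2 = {}"
  have X_O1: "X u \<in> O1" if "u \<in> O1" for u
  proof (rule ccontr)
    assume "X u \<notin> O1"
    then have "u \<in> common_darts S X O1 O2"
      using that O1_subset_S X_in_S in_O2_iff unfolding common_darts_def by auto
    with none show False
      by simp
  qed
  have Y_O1: "Y u \<in> O1" if "u \<in> O1" for u
    using Y_in_O1_iff X_O1 that O1_subset_S by blast
  obtain u v where "u \<in> O1" and "v \<in> O2"
    using O1_nonempty januarial_faces.O1_nonempty[OF swap_faces] by blast
  moreover have "transitive_xy S X Y"
    using januarial unfolding januarial_def by blast
  ultimately have "(u, v) \<in> ({(w, X w) | w. w \<in> S} \<union> {(w, Y w) | w. w \<in> S})\<^sup>*"
    unfolding transitive_xy_def using S_eq_O1_Un_O2 by blast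
  then have "v \<in> O1"
    by (induction rule: rtrancl_induct) (use \<open>u \<in> O1\<close> X_O1 Y_O1 in auto)
  with \<open>v \<in> O2\<close> show False
    using O1_O2_disjoint by blast
qed

lemma simple_type_common_dart_unique:
  assumes "simple_type S X Y O1 O2" and "C \<in> common_vertices S Y O1 O2"
    and "z \<in> C" "z \<in> common_darts S X O1 O2" and "z' \<in> C" "z' \<in> common_darts S X O1 O2"
  shows "z = z'"
proof (rule ccontr)
  assume "z \<noteq> z'"
  obtain w where w: "w \<in> C" "w \<in> common_darts S X O2 O1"
    using januarial_faces.common_vertex_has_common_dart[OF swap_faces] assms(2)
    unfolding common_vertices_commute by blast
  let ?T = "{u \<in> C. u \<in> common_darts S X O1 O2 \<or> u \<in> common_darts S X O2 O1}"
  have "?T \<subseteq> S"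
    using common_darts_subset_S januarial_faces.common_darts_subset_S[OF swap_faces] by blast
  then have "finite ?T"
    using finite_S by (rule finite_subset)
  moreover have "card ?T = 2"
    using assms(1,2) unfolding simple_type_def common_degree_def by blast
  moreover have "{z, z', w} \<subseteq> ?T"
    using assms(3-6) w by blast
  moreover have "w \<noteq> z" and "w \<noteq> z'"
    using assms(4,6) w(2) O1_O2_disjoint unfolding common_darts_def by auto
  ultimately have "card {z, z', w} \<le> 2" and "card {z, z', w} = 3"
    using card_mono[of ?T "{z, z', w}"] \<open>z \<noteq> z'\<close> by auto
  then show False
    by simp
qed

lemma bij_betw_orb_Y_common_darts:
  assumes "simple_type S X Y O1 O2"
  shows "bij_betw (orb Y) (common_darts S X O1 O2) (common_vertices S Y O1 O2)"
proof (rule bij_betw_imageI)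
  show "inj_on (orb Y) (common_darts S X O1 O2)"
  proof (rule inj_onI)
    fix z z'
    assume z: "z \<in> common_darts S X O1 O2" "z' \<in> common_darts S X O1 O2" "orb Y z = orb Y z'"
    show "z = z'"
      using simple_type_common_dart_unique[OF assms orb_Y_common_dart[OF z(1)]]
        self_in_orb z by metis
  qed
  show "orb Y ` common_darts S X O1 O2 = common_vertices S Y O1 O2"
  proof
    show "orb Y ` common_darts S X O1 O2 \<subseteq> common_vertices S Y O1 O2"
      using orb_Y_common_dart by blast
    show "common_vertices S Y O1 O2 \<subseteq> orb Y ` common_darts S X O1 O2"
    proof
      fix C
      assume C: "C \<in> common_vertices S Y O1 O2"
      then obtain z where z: "z \<in> C" "z \<in> common_darts S X O1 O2"
        using common_vertex_has_common_dart by blast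
      obtain w where "w \<in> S" and "C = orb Y w"
        using C unfolding common_vertices_def y_orbits_def by blast
      then have "C = orb Y z"
        using orb_Y_eq z(1) by simp
      then show "C \<in> orb Y ` common_darts S X O1 O2"
        using z(2) by blast
    qed
  qed
qed

lemma card_common_edges: "card (common_edges S X O1 O2) = card (common_darts S X O1 O2)"
proof -
  have "inj_on (\<lambda>u. {u, X u}) (common_darts S X O1 O2)"
  proof (rule inj_onI)
    fix z z'
    assume z: "z \<in> common_darts S X O1 O2" "z' \<in> common_darts S X O1 O2" "{z, X z} = {z', X z'}"
    have "z \<noteq> X z'"
      using z(1,2) O1_O2_disjoint unfolding common_darts_def by blast
    then show "z = z'"
      using z(3) by (metis doubleton_eq_iff)
  qed
  moreover have "common_edges S X O1 O2 = (\<lambda>u. {u, X u}) ` common_darts S X O1 O2"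
    unfolding common_edges_def by blast
  ultimately show ?thesis
    by (simp add: card_image)
qed

lemma common_alpha_simple: "simple_type S X Y O1 O2 \<Longrightarrow> common_alpha S X Y O1 O2 = 0"
  unfolding common_alpha_def card_common_edges
  using bij_betw_same_card[OF bij_betw_orb_Y_common_darts] by simp

subsection \<open>Boundary components of the neighbourhood of a face\<close>

abbreviation boundary_walk :: "'a \<Rightarrow> 'a" where
  "boundary_walk \<equiv> \<lambda>u. restr_rot Y (cl_darts S X O1) (X u)"

lemma cl_darts_Int_O2: "cl_darts S X O1 \<inter> O2 = common_darts S X O2 O1"
  unfolding cl_darts_def common_darts_def using O1_O2_disjoint by blast

lemma Y_in_O1_iff_off_cl_darts:
  assumes "z \<in> S" and "z \<notin> cl_darts S X O1"
  shows "Y z \<in> O1 \<longleftrightarrow> z \<in> O1"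
proof -
  have "X z \<in> O1 \<longleftrightarrow> z \<in> O1"
    using assms unfolding cl_darts_def by auto
  then show ?thesis
    using Y_in_O1_iff assms(1) by simp
qed

lemma funpow_Y_X_eq_funpow_xy:
  assumes u: "u \<in> O1" and skip: "\<And>i. 0 < i \<Longrightarrow> i < m \<Longrightarrow> (xy ^^ i) u \<notin> cl_darts S X O1"
    and "0 < j" and "j \<le> m"
  shows "(Y ^^ j) (X u) = (xy ^^ j) u"
  using assms(3,4)
proof (induction j)
  case (Suc j)
  show ?case
  proof (cases "j = 0")
    case True
    then show ?thesis
      by (simp add: xyact_def)
  next
    case False
    let ?v = "(xy ^^ j) u"
    have "?v \<in> O1"
      using u funpow_in_orb[of j xy u] orb_xy_O1 by blast
    moreover have "?v \<notin> cl_darts S X O1"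
      using skip False Suc.prems by simp
    ultimately have "X ?v = ?v"
      using O1_subset_S unfolding cl_darts_def by blast
    have "(Y ^^ Suc j) (X u) = Y ?v"
      using Suc False by simp
    also have "\<dots> = xy ?v"
      using \<open>X ?v = ?v\<close> unfolding xyact_def by simp
    finally show ?thesis
      by simp
  qed
qed simp

lemma boundary_walk_eq_restr_rot_xy:
  assumes u: "u \<in> cl_darts S X O1 \<inter> O1"
  shows "boundary_walk u = restr_rot xy (cl_darts S X O1) u"
proof -
  let ?D = "cl_darts S X O1"
  have "u \<in> S"
    using u O1_subset_S by blast
  obtain n where "0 < n" and "(xy ^^ n) u = u"
    using xy_periodic[OF \<open>u \<in> S\<close>] by blast
  with u obtain m where m: "0 < m" "(xy ^^ m) u \<in> ?D"
      "\<forall>j. 0 < j \<longrightarrow> j < m \<longrightarrow> (xy ^^ j) u \<notin> ?D"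
    and r: "restr_rot xy ?D u = (xy ^^ m) u"
    using restr_rot_first_return[of n xy u ?D] by auto
  have same: "(Y ^^ j) (X u) = (xy ^^ j) u" if "0 < j" and "j \<le> m" for j
    using funpow_Y_X_eq_funpow_xy[of u m j] u m(3) that by blast
  have "boundary_walk u = (Y ^^ m) (X u)"
    by (rule restr_rot_eq) (use m same in auto)
  also have "\<dots> = restr_rot xy ?D u"
    using same m(1) r by simp
  finally show ?thesis .
qed

text \<open>On the darts of O1 itself the boundary walk only skips the x-fixed points of the face,
  so it runs once around the face.\<close>
lemma orb_boundary_walk_face:
  assumes u: "u \<in> cl_darts S X O1 \<inter> O1"
  shows "orb boundary_walk u = cl_darts S X O1 \<inter> O1"
proof -
  let ?D = "cl_darts S X O1"
  have "u \<in> S"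
    using u O1_subset_S by blast
  obtain n where "0 < n" and "(xy ^^ n) u = u"
    using xy_periodic[OF \<open>u \<in> S\<close>] by blast
  then have orb_eq: "orb (restr_rot xy ?D) u = ?D \<inter> O1"
    using orb_restr_rot[of n xy u ?D] u orb_xy_O1 by auto
  then have "orb (restr_rot xy ?D) u = orb boundary_walk u"
    using boundary_walk_eq_restr_rot_xy by (intro orb_cong) auto
  with orb_eq show ?thesis
    by simp
qed

lemma funpow_Y_notin_O1:
  assumes "z \<in> S" and "Y z \<notin> O1"
    and skip: "\<And>i. 0 < i \<Longrightarrow> i < m \<Longrightarrow> (Y ^^ i) z \<notin> cl_darts S X O1"
    and "0 < j" and "j \<le> m"
  shows "(Y ^^ j) z \<notin> O1"
  using assms(4,5)
proof (induction j)
  case (Suc j)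
  have in_S: "(Y ^^ i) z \<in> S" for i
    by (induction i) (simp_all add: assms(1) Y_in_S)
  show ?case
  proof (cases "j = 0")
    case True
    then show ?thesis
      using assms(2) by simp
  next
    case False
    then have "(Y ^^ j) z \<notin> O1" and "(Y ^^ j) z \<notin> cl_darts S X O1"
      using Suc skip by simp_all
    then show ?thesis
      using Y_in_O1_iff_off_cl_darts in_S by simp
  qed
qed simp

text \<open>From the O1-end of a common edge, y turns through corners of O2 until it reaches the
  next common edge at the same vertex.\<close>
lemma boundary_walk_common_dart:
  assumes u: "u \<in> common_darts S X O2 O1"
  shows "boundary_walk u \<in> common_darts S X O2 O1" and "orb Y (boundary_walk u) = orb Y (X u)"
proof -
  let ?D = "cl_darts S X O1"
  define w where "w = X u"
  have "w \<in> common_darts S X O1 O2"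
    unfolding w_def using januarial_faces.X_common_darts[OF swap_faces u] .
  then have "w \<in> S" and "w \<in> ?D" and "Y w \<notin> O1"
    using u X_X Y_in_O1_iff O1_O2_disjoint unfolding w_def common_darts_def cl_darts_def by auto
  obtain n where "0 < n" and "(Y ^^ n) w = w"
    using Y_periodic[OF \<open>w \<in> S\<close>] by blast
  with \<open>w \<in> ?D\<close> obtain m where m: "0 < m" "(Y ^^ m) w \<in> ?D"
      "\<forall>j. 0 < j \<longrightarrow> j < m \<longrightarrow> (Y ^^ j) w \<notin> ?D"
    and r: "boundary_walk u = (Y ^^ m) w"
    using restr_rot_first_return[of n Y w ?D] unfolding w_def by auto
  have "(Y ^^ m) w \<notin> O1"
    using funpow_Y_notin_O1[OF \<open>w \<in> S\<close> \<open>Y w \<notin> O1\<close>] m by blast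
  then have "boundary_walk u \<in> ?D \<inter> O2"
    using r m(2) in_O2_iff unfolding cl_darts_def by auto
  then show "boundary_walk u \<in> common_darts S X O2 O1"
    using cl_darts_Int_O2 by simp
  show "orb Y (boundary_walk u) = orb Y (X u)"
    using orb_Y_eq[OF \<open>w \<in> S\<close> funpow_in_orb, of m] r w_def by simp
qed

lemma common_darts_eq_X_image: "common_darts S X O1 O2 = X ` common_darts S X O2 O1"
proof
  show "common_darts S X O1 O2 \<subseteq> X ` common_darts S X O2 O1"
  proof
    fix z
    assume z: "z \<in> common_darts S X O1 O2"
    then have "z = X (X z)"
      using X_X common_darts_subset_S by auto
    with X_common_darts[OF z] show "z \<in> X ` common_darts S X O2 O1"
      by blast
  qed
  show "X ` common_darts S X O2 O1 \<subseteq> common_darts S X O1 O2"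
    using januarial_faces.X_common_darts[OF swap_faces] by blast
qed

lemma common_adj_eq_swapped_darts:
  "common_adj S X Y O1 O2 = (\<lambda>v. (orb Y (X v), orb Y v)) ` common_darts S X O2 O1"
proof -
  have "common_adj S X Y O1 O2 = (\<lambda>z. (orb Y z, orb Y (X z))) ` X ` common_darts S X O2 O1"
    unfolding common_adj_def common_darts_eq_X_image by blast
  also have "\<dots> = (\<lambda>v. (orb Y (X v), orb Y v)) ` common_darts S X O2 O1"
    unfolding image_image
    using X_X januarial_faces.common_darts_subset_S[OF swap_faces] by (intro image_cong) auto
  finally show ?thesis .
qed

lemma common_adj_eq:
  "common_adj S X Y O1 O2 = (\<lambda>v. (orb Y (boundary_walk v), orb Y v)) ` common_darts S X O2 O1"
  unfolding common_adj_eq_swapped_darts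
  by (rule image_cong) (simp_all add: boundary_walk_common_dart(2))

lemma common_adj_commute: "common_adj S X Y O2 O1 = (common_adj S X Y O1 O2)\<inverse>"
proof -
  have "common_adj S X Y O2 O1 = (\<lambda>v. (orb Y v, orb Y (X v))) ` common_darts S X O2 O1"
    unfolding common_adj_def by blast
  then show ?thesis
    unfolding common_adj_eq_swapped_darts by auto
qed

lemma common_components_commute: "common_components S X Y O2 O1 = common_components S X Y O1 O2"
  unfolding common_components_def common_vertices_commute common_adj_commute
  by (simp add: Un_commute)

context
  assumes simple: "simple_type S X Y O1 O2"
begin

lemma bij_betw_orb_Y_common_darts_swap:
  "bij_betw (orb Y) (common_darts S X O2 O1) (common_vertices S Y O1 O2)"
proof -
  have "simple_type S X Y O2 O1"
    using simple simple_type_commute by simp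
  from januarial_faces.bij_betw_orb_Y_common_darts[OF swap_faces this] show ?thesis
    unfolding common_vertices_commute .
qed

lemma inj_on_boundary_walk: "inj_on boundary_walk (common_darts S X O2 O1)"
proof (rule inj_onI)
  fix v v'
  assume v: "v \<in> common_darts S X O2 O1" "v' \<in> common_darts S X O2 O1"
    and eq: "boundary_walk v = boundary_walk v'"
  have "orb Y (X v) = orb Y (X v')"
    using boundary_walk_common_dart(2) v eq by metis
  moreover have "X v \<in> common_darts S X O1 O2" and "X v' \<in> common_darts S X O1 O2"
    using januarial_faces.X_common_darts[OF swap_faces] v by blast+
  ultimately have "X v = X v'"
    using bij_betw_imp_inj_on[OF bij_betw_orb_Y_common_darts[OF simple]] by (auto dest: inj_onD)
  then show "v = v'"
    using X_X v januarial_faces.common_darts_subset_S[OF swap_faces] by (metis subsetD)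
qed

lemma common_component_eq:
  assumes u: "u \<in> common_darts S X O2 O1"
  shows "{C \<in> common_vertices S Y O1 O2.
            (orb Y u, C) \<in> (common_adj S X Y O1 O2 \<union> (common_adj S X Y O1 O2)\<inverse>)\<^sup>*}
         = orb Y ` orb boundary_walk u"
proof -
  let ?A = "common_darts S X O2 O1"
  let ?G = "{(v, boundary_walk v) | v. v \<in> ?A}"
  have closed: "boundary_walk v \<in> ?A" if "v \<in> ?A" for v
    using boundary_walk_common_dart(1) that .
  have "finite ?A"
    using finite_S januarial_faces.common_darts_subset_S[OF swap_faces] by (rule finite_subset[rotated])
  then have periodic: "\<exists>n>0. (boundary_walk ^^ n) v = v" if "v \<in> ?A" for v
    by (rule periodic_if_inj_on[OF _ closed inj_on_boundary_walk that])
  have adj: "common_adj S X Y O1 O2 \<union> (common_adj S X Y O1 O2)\<inverse>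
      = map_prod (orb Y) (orb Y) ` (?G \<union> ?G\<inverse>)"
    unfolding common_adj_eq by auto
  have "?G \<union> ?G\<inverse> \<subseteq> ?A \<times> ?A"
    using closed by auto
  then have "(map_prod (orb Y) (orb Y) ` (?G \<union> ?G\<inverse>))\<^sup>* `` {orb Y u}
      = orb Y ` ((?G \<union> ?G\<inverse>)\<^sup>* `` {u})"
    by (rule rtrancl_map_prod_Image[OF bij_betw_imp_inj_on[OF bij_betw_orb_Y_common_darts_swap] _ u])
  also have "(?G \<union> ?G\<inverse>)\<^sup>* `` {u} = orb boundary_walk u"
    using rtrancl_graph_iff_orb[OF closed periodic u] by blast
  finally have component: "(map_prod (orb Y) (orb Y) ` (?G \<union> ?G\<inverse>))\<^sup>* `` {orb Y u}
      = orb Y ` orb boundary_walk u" .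
  have "orb boundary_walk u \<subseteq> ?A"
    using u closed by (rule orb_subset)
  then have "orb Y ` orb boundary_walk u \<subseteq> common_vertices S Y O1 O2"
    using bij_betw_imp_surj_on[OF bij_betw_orb_Y_common_darts_swap] by blast
  with component show ?thesis
    unfolding adj by blast
qed

lemma card_boundary_walk_orbits:
  "card (orb boundary_walk ` common_darts S X O2 O1) = common_components S X Y O1 O2"
proof -
  let ?A = "common_darts S X O2 O1"
  let ?component = "\<lambda>C. {C' \<in> common_vertices S Y O1 O2.
      (C, C') \<in> (common_adj S X Y O1 O2 \<union> (common_adj S X Y O1 O2)\<inverse>)\<^sup>*}"
  have "?component ` common_vertices S Y O1 O2 = ?component ` orb Y ` ?A"
    using bij_betw_imp_surj_on[OF bij_betw_orb_Y_common_darts_swap] by simp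
  also have "\<dots> = image (orb Y) ` orb boundary_walk ` ?A"
    unfolding image_image using common_component_eq by (intro image_cong) auto
  finally have "common_components S X Y O1 O2 = card (image (orb Y) ` orb boundary_walk ` ?A)"
    unfolding common_components_def by simp
  moreover have "inj_on (image (orb Y)) (orb boundary_walk ` ?A)"
  proof (rule inj_on_subset)
    show "inj_on (image (orb Y)) (Pow ?A)"
      using inj_on_image_Pow bij_betw_imp_inj_on[OF bij_betw_orb_Y_common_darts_swap] .
    have "orb boundary_walk v \<subseteq> ?A" if "v \<in> ?A" for v
      using that boundary_walk_common_dart(1) by (rule orb_subset)
    then show "orb boundary_walk ` ?A \<subseteq> Pow ?A"
      by blast
  qed
  ultimately show ?thesis
    by (simp add: card_image)
qed

lemma nbhd_boundary_simple: "nbhd_boundary S X Y O1 = int (common_components S X Y O1 O2)"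
proof -
  let ?D = "cl_darts S X O1" and ?A = "common_darts S X O2 O1"
  have D: "?D = ?D \<inter> O1 \<union> ?A"
    using cl_darts_Int_O2 S_eq_O1_Un_O2 unfolding cl_darts_def by blast
  obtain z where "z \<in> common_darts S X O1 O2"
    using common_darts_nonempty by blast
  then have z: "z \<in> ?D \<inter> O1"
    unfolding common_darts_def cl_darts_def by blast
  then have face: "orb boundary_walk ` (?D \<inter> O1) = {?D \<inter> O1}"
    using orb_boundary_walk_face by blast
  have "?D \<inter> O1 \<notin> orb boundary_walk ` ?A"
  proof
    assume "?D \<inter> O1 \<in> orb boundary_walk ` ?A"
    then obtain v where "v \<in> ?A" and "orb boundary_walk v = ?D \<inter> O1"
      by blast
    then have "z \<in> ?A"
      using z orb_subset[of v ?A boundary_walk] boundary_walk_common_dart(1) by blast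
    with z show False
      using O1_O2_disjoint unfolding common_darts_def by blast
  qed
  moreover have "finite (orb boundary_walk ` ?A)"
    using finite_S januarial_faces.common_darts_subset_S[OF swap_faces] by (simp add: finite_subset)
  moreover have "orb boundary_walk ` ?D = insert (?D \<inter> O1) (orb boundary_walk ` ?A)"
    by (subst D) (simp add: image_Un face)
  ultimately have "card (orb boundary_walk ` ?D) = Suc (common_components S X Y O1 O2)"
    using card_boundary_walk_orbits by simp
  then show ?thesis
    unfolding nbhd_boundary_def by simp
qed

end

theorem nbhd_genus_sum_simple:
  assumes "simple_type S X Y O1 O2"
  shows "nbhd_genus S X Y O1 + nbhd_genus S X Y O2 + real (common_components S X Y O1 O2)
    = diagram_genus S X Y + 1"
proof -
  have "nbhd_boundary S X Y O2 = int (common_components S X Y O1 O2)"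
    using januarial_faces.nbhd_boundary_simple[OF swap_faces] assms
    unfolding simple_type_commute common_components_commute by blast
  then show ?thesis
    using nbhd_genus_sum nbhd_boundary_simple[OF assms] common_alpha_simple[OF assms] by simp
qed

end

text \<open>The hypotheses on p, k and the coefficients only serve to construct the januarial;
  the identities hold for every januarial and its two faces.\<close>
theorem proposition1:
  fixes k p :: nat and a b c d e f \<theta> :: int and O1 O2 :: "nat set"
  defines "l \<equiv> (p + 1) div 2"
    and "S \<equiv> PL p" and "X \<equiv> Xmap p a c d" and "Y \<equiv> Ymap p b d e f"
    and "nabla \<equiv> - (a ^ 2 + d * c ^ 2)"
    and "r \<equiv> a * (2 * e - b) + 2 * d * c * f"
  assumes k: "k \<ge> 2"
    and p: "prime p"
    and nabla_nz: "\<not> [nabla = 0] (mod int p)"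
    and detY: "[1 + d * f ^ 2 + e ^ 2 - e * b = 0] (mod int p)"
    and theta_r: "[\<theta> * nabla = r ^ 2] (mod int p)"
    and theta_root: "[fpoly l \<theta> = 0] (mod int p)"
    and theta_prim: "\<forall>s. s dvd l \<and> s > 1 \<longrightarrow> \<not> [fpoly (l div s) \<theta> = 0] (mod int p)"
    and Yk: "\<forall>z\<in>S. (Y ^^ k) z = z"
    and jan: "januarial S X Y"
    and O1: "O1 \<in> xy_orbits S X Y" and O2: "O2 \<in> xy_orbits S X Y" and O12: "O1 \<noteq> O2"
  shows
    "(simple_type S X Y O1 O2 \<longrightarrow>
        nbhd_genus S X Y O1 + nbhd_genus S X Y O2 + real (common_components S X Y O1 O2)
          = diagram_genus S X Y + 1)
     \<and>
     (\<not> simple_type S X Y O1 O2 \<longrightarrow>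
        nbhd_genus S X Y O1 + nbhd_genus S X Y O2
          + (real_of_int (nbhd_boundary S X Y O1) + real_of_int (nbhd_boundary S X Y O2)
             + real_of_int (common_alpha S X Y O1 O2)) / 2
          = diagram_genus S X Y + 1)"
proof -
  interpret januarial_faces S X Y O1 O2
    using jan O1 O2 O12 by unfold_locales
  show ?thesis
    using nbhd_genus_sum nbhd_genus_sum_simple by blast
qed

end
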